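(* For $|q|<1$ and $m\in\mathbb Z$ define $$f_m(q)=\sum_{n,k\ge0}(-1)^kq^{n(n+1)+k(k+1)/2-nk+mn}\frac{(q;q)_{n+k}}{(q;q)_n^3(q;q)_k}.$$ Then $$f_{-1}(q)=(q;q)_\infty\sum_{n\ge0}\frac{q^{n(n+1)}}{(q;q)_n^3},\qquad f_{-2}(q)=(q;q)_\infty\sum_{n\ge0}(2-q^n)\frac{q^{n(n+1)}}{(q;q)_n^3},$$ $$f_{-3}(q)=(q;q)_\infty\sum_{n\ge0}\Big((3+q^{-1})-(2+2q^{-1})q^n+q^{2n-1}\Big)\frac{q^{n(n+1)}}{(q;q)_n^3}.$$
   Context: $(a;q)_n=\prod_{j=0}^{n-1}(1-aq^j)$ and $(q;q)_\infty=\prod_{j\ge1}(1-q^j)$, for $|q|<1$. The double series converges absolutely since $n^2-nk+k^2/2$ is a positive definite quadratic form. *)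

theory Defs
  imports "HOL-Analysis.Analysis"
begin

definition qpoch :: "complex \<Rightarrow> complex \<Rightarrow> nat \<Rightarrow> complex" where
  "qpoch a q n = (\<Prod>j<n. 1 - a * q ^ j)"

definition qpoch_inf :: "complex \<Rightarrow> complex" where
  "qpoch_inf q = (\<Prod>j. 1 - q ^ Suc j)"

text \<open>The summand of f_m; the exponent n(n+1) + k(k+1)/2 - nk + mn is an integer
  (possibly negative for m < 0), so we use integer powers.\<close>
definition f_term :: "int \<Rightarrow> complex \<Rightarrow> nat \<times> nat \<Rightarrow> complex" where
  "f_term m q nk = (case nk of (n, k) \<Rightarrow>
     (-1) ^ k * q powi (int (n * (n + 1)) + int (k * (k + 1) div 2) - int n * int k + m * int n)
     * qpoch q q (n + k) / ((qpoch q q n) ^ 3 * qpoch q q k))"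

definition f_series :: "int \<Rightarrow> complex \<Rightarrow> complex" where
  "f_series m q = (\<Sum>\<^sub>\<infinity>nk\<in>UNIV. f_term m q nk)"

end

theory Submission
  imports Defs
begin

text \<open>
  Write (a)_n for (a;q)_n and [N,s] for the q-binomial coefficient. Splitting
  (q)_{n+k} = (q)_n (q^{n+1})_k and expanding the second factor by Cauchy's q-binomial theorem, the sum
  over k of the inner terms becomes a double sum whose inner part is Euler's series
  sum_s (-1)^s q^{s(s-1)/2 + s d} / (q)_s = (q)_\<infinity> / (q)_{d-1}, which vanishes for d \<le> 0.
  Hence the k-sum equals (q)_n (q)_\<infinity> sum_{N \<ge> n} q^{N(N+1)} / ((q)_N (q)_{N-n}), and regrouping
  by N gives
    f_m(q) = (q)_\<infinity> sum_N q^{N(N+1)} / (q)_N^3 * P_N,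
    P_N = sum_{s \<le> N} [N,s] (-1)^s q^{s(s+1)/2} (q^{m+1})_s,
  again by the q-binomial theorem. For m = -1, -2, -3 the factor (q^{m+1})_s vanishes once s > -m-1, so
  P_N is 1, 2 - q^N, resp. the stated polynomial in q^N. All rearrangements are justified by absolute
  convergence, which holds because the exponents are positive definite quadratic forms for m \<ge> -3.
\<close>

section \<open>q-Pochhammer symbols\<close>

lemma qpoch_0 [simp]: "qpoch a q 0 = 1"
  by (simp add: qpoch_def)

lemma qpoch_Suc: "qpoch a q (Suc n) = qpoch a q n * (1 - a * q ^ n)"
  by (simp add: qpoch_def)

lemma qpoch_qq_Suc: "qpoch q q (Suc n) = qpoch q q n * (1 - q ^ Suc n)"
  by (simp add: qpoch_Suc)

lemma qpoch_Suc_shift: "qpoch a q (Suc n) = (1 - a) * qpoch (a * q) q n"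
  unfolding qpoch_def by (subst prod.lessThan_Suc_shift) (simp add: mult_ac)

lemma qpoch_add: "qpoch a q (m + n) = qpoch a q m * qpoch (a * q ^ m) q n"
  by (induction n) (simp_all add: qpoch_Suc power_add mult_ac)

lemma qpoch_nonzero:
  assumes "norm a < 1" and "norm q \<le> 1"
  shows "qpoch a q n \<noteq> 0"
proof -
  have "norm (a * q ^ j) < 1" for j
    using assms by (simp add: norm_mult norm_power mult_le_one power_le_one
                         order.strict_trans1[OF mult_right_le_one_le])
  then have "1 - a * q ^ j \<noteq> 0" for j
    by (metis eq_iff_diff_eq_0 norm_one order.irrefl)
  then show ?thesis
    unfolding qpoch_def by (simp add: prod_zero_iff)
qed

lemma qpoch_qq_nonzero: "norm q < 1 \<Longrightarrow> qpoch q q n \<noteq> 0"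
  by (rule qpoch_nonzero) simp_all

lemma qpoch_powi_neg_eq_0:
  assumes "q \<noteq> 0" and "j < n"
  shows "qpoch (q powi (- int j)) q n = 0"
proof -
  have "1 - q powi (- int j) * q ^ j = 0"
    using assms by (simp add: power_int_minus)
  then show ?thesis
    unfolding qpoch_def using assms by (intro prod_zero) auto
qed

lemma sum_power_Suc_le:
  fixes r :: real
  assumes "0 \<le> r" and "r < 1"
  shows "(\<Sum>j<n. r ^ Suc j) \<le> r / (1 - r)"
proof -
  have "(\<Sum>j<n. r ^ Suc j) = r * ((1 - r ^ n) / (1 - r))"
    using assms by (simp add: sum_distrib_left[symmetric] sum_gp_strict)
  also have "\<dots> \<le> r / (1 - r)"
    using assms by (simp add: divide_right_mono mult_left_le)
  finally show ?thesis .
qed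

lemma norm_qpoch_qq_le:
  assumes "norm q < 1"
  shows "norm (qpoch q q n) \<le> exp (norm q / (1 - norm q))"
proof -
  let ?r = "norm q"
  have "norm (qpoch q q n) \<le> (\<Prod>j<n. norm (1 - q * q ^ j))"
    unfolding qpoch_def by (rule norm_prod_le)
  also have "\<dots> \<le> (\<Prod>j<n. 1 + ?r ^ Suc j)"
    by (intro prod_mono conjI norm_ge_zero order.trans[OF norm_triangle_ineq4])
       (simp add: norm_mult norm_power)
  also have "\<dots> \<le> exp (\<Sum>j<n. ?r ^ Suc j)"
    by (rule prod_le_exp_sum) simp
  also have "\<dots> \<le> exp (?r / (1 - ?r))"
    using sum_power_Suc_le[of ?r n] assms by simp
  finally show ?thesis .
qed

lemma exp_neg_le_one_minus:
  fixes x :: real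
  assumes "0 \<le> x" and "x < 1"
  shows "exp (- (x / (1 - x))) \<le> 1 - x"
proof -
  have "1 / (1 - x) \<le> exp (x / (1 - x))"
    using exp_ge_add_one_self[of "x / (1 - x)"] assms by (simp add: field_simps)
  then have "inverse (exp (x / (1 - x))) \<le> 1 - x"
    using assms by (metis divide_pos_pos exp_gt_zero inverse_eq_divide le_imp_inverse_le
        inverse_inverse_eq zero_less_one diff_gt_0_iff_gt)
  then show ?thesis
    by (simp add: exp_minus)
qed

lemma norm_qpoch_qq_ge:
  assumes "norm q < 1"
  shows "exp (- (norm q / (1 - norm q) ^ 2)) \<le> norm (qpoch q q n)"
proof -
  let ?r = "norm q"
  have "exp (- (?r / (1 - ?r) ^ 2)) \<le> exp (- ((\<Sum>j<n. ?r ^ Suc j) / (1 - ?r)))"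
    using divide_right_mono[OF sum_power_Suc_le[of ?r n], of "1 - ?r"] assms
    by (simp add: power2_eq_square)
  also have "\<dots> = (\<Prod>j<n. exp (- (?r ^ Suc j / (1 - ?r))))"
    by (simp add: exp_sum[symmetric] sum_negf sum_divide_distrib)
  also have "\<dots> \<le> (\<Prod>j<n. norm (1 - q * q ^ j))"
  proof (intro prod_mono conjI)
    fix j
    have rj: "0 \<le> ?r ^ Suc j" "?r ^ Suc j < 1" "?r ^ Suc j \<le> ?r"
      using assms by (simp_all add: power_less_one_iff power_Suc_le_self del: power_Suc)
    have "exp (- (?r ^ Suc j / (1 - ?r))) \<le> exp (- (?r ^ Suc j / (1 - ?r ^ Suc j)))"
      using rj assms by (simp add: frac_le)
    also have "\<dots> \<le> 1 - ?r ^ Suc j"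
      by (rule exp_neg_le_one_minus[OF rj(1,2)])
    also have "\<dots> \<le> norm (1 - q * q ^ j)"
      by (metis norm_one norm_power norm_triangle_ineq2 power_Suc)
    finally show "exp (- (?r ^ Suc j / (1 - ?r))) \<le> norm (1 - q * q ^ j)" .
  qed simp
  also have "\<dots> = norm (qpoch q q n)"
    unfolding qpoch_def by (simp add: prod_norm)
  finally show ?thesis .
qed

lemma qpoch_qq_bounded_below:
  assumes "norm q < 1"
  obtains c where "0 < c" and "\<And>n. c \<le> norm (qpoch q q n)"
  using norm_qpoch_qq_ge[OF assms] exp_gt_zero by blast

lemma convergent_prod_qpoch_inf:
  fixes q :: complex
  assumes "norm q < 1"
  shows "convergent_prod (\<lambda>j. 1 - q ^ Suc j)"
proof -
  have "norm ((1 - q ^ Suc j) - 1) = norm q * norm q ^ j" for j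
    by (simp add: norm_mult norm_power)
  then have "summable (\<lambda>j. norm ((1 - q ^ Suc j) - 1))"
    using assms by (simp add: summable_mult summable_geometric)
  then show ?thesis
    by (intro abs_convergent_prod_imp_convergent_prod summable_imp_abs_convergent_prod)
qed

lemma qpoch_qq_LIMSEQ:
  assumes "norm q < 1"
  shows "(\<lambda>n. qpoch q q n) \<longlonglongrightarrow> qpoch_inf q"
proof -
  have "(\<Prod>i\<le>n. 1 - q ^ Suc i) = qpoch q q (Suc n)" for n
    unfolding qpoch_def by (simp add: lessThan_Suc_atMost)
  then have "(\<lambda>n. qpoch q q (Suc n)) \<longlonglongrightarrow> qpoch_inf q"
    using convergent_prod_LIMSEQ[OF convergent_prod_qpoch_inf[OF assms]]
    unfolding qpoch_inf_def by simp
  then show ?thesis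
    by (rule LIMSEQ_imp_Suc)
qed

lemma qpoch_inf_nonzero:
  assumes "norm q < 1"
  shows "qpoch_inf q \<noteq> 0"
proof -
  have "1 - q ^ Suc i \<noteq> 0" for i
    using qpoch_qq_nonzero[OF assms, of "Suc i"] by (simp add: qpoch_qq_Suc)
  then show ?thesis
    unfolding qpoch_inf_def using prodinf_nonzero[OF convergent_prod_qpoch_inf[OF assms]] by blast
qed

lemma choose_two_0_1 [simp]: "0 choose 2 = 0" "Suc 0 choose 2 = 0"
  by (simp_all add: choose_two)

lemma Suc_choose_two: "Suc n choose 2 = (n choose 2) + n"
  by (simp add: numeral_2_eq_2)

lemma int_choose_two: "2 * int (n choose 2) = int n * int n - int n"
  by (induction n) (simp_all add: Suc_choose_two algebra_simps)

lemma mult_Suc_div_two: "n * (n + 1) div 2 = Suc n choose 2"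
  by (simp add: choose_two)

section \<open>q-binomial coefficients\<close>

definition qbinom :: "complex \<Rightarrow> nat \<Rightarrow> nat \<Rightarrow> complex" where
  "qbinom q k r = (if r \<le> k then qpoch q q k / (qpoch q q r * qpoch q q (k - r)) else 0)"

lemma qbinom_0_right: "norm q < 1 \<Longrightarrow> qbinom q k 0 = 1"
  using qpoch_qq_nonzero[of q k] by (simp add: qbinom_def)

lemma qbinom_diag: "norm q < 1 \<Longrightarrow> qbinom q k k = 1"
  using qpoch_qq_nonzero[of q k] by (simp add: qbinom_def)

lemma qbinom_1_right:
  assumes "norm q < 1"
  shows "qbinom q n 1 * (1 - q) = 1 - q ^ n"
proof (cases n)
  case (Suc k)
  have "qpoch q q 1 = 1 - q"
    by (simp add: qpoch_def)
  then show ?thesis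
    unfolding qbinom_def Suc using qpoch_qq_nonzero[OF assms, of k] qpoch_qq_nonzero[OF assms, of 1]
    by (simp add: qpoch_qq_Suc field_simps)
qed (simp add: qbinom_def)

lemma qbinom_2_right:
  assumes "norm q < 1" and "q \<noteq> 0"
  shows "qbinom q n 2 * ((1 - q) * (1 - q ^ 2)) = (1 - q ^ n) * (1 - q ^ n / q)"
proof (cases "n < 2")
  case True
  then consider "n = 0" | "n = 1" by linarith
  then show ?thesis
    by cases (use assms in \<open>simp_all add: qbinom_def\<close>)
next
  case False
  then obtain j where n: "n = Suc (Suc j)"
    by (metis add_2_eq_Suc le_Suc_ex not_less)
  have q2: "qpoch q q 2 = (1 - q) * (1 - q ^ 2)"
    by (simp add: qpoch_def numeral_2_eq_2)
  have "qbinom q n 2 = qpoch q q j * ((1 - q ^ Suc j) * (1 - q ^ Suc (Suc j))) / (qpoch q q 2 * qpoch q q j)"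
    unfolding qbinom_def n by (simp add: qpoch_qq_Suc numeral_2_eq_2 mult.assoc)
  then have "qbinom q n 2 * ((1 - q) * (1 - q ^ 2)) = (1 - q ^ Suc j) * (1 - q ^ Suc (Suc j))"
    using qpoch_qq_nonzero[OF assms(1), of j] qpoch_qq_nonzero[OF assms(1), of 2]
    unfolding q2[symmetric] by simp
  moreover have "q ^ Suc (Suc j) / q = q ^ Suc j"
    using assms(2) by simp
  ultimately show ?thesis
    unfolding n by (simp add: mult.commute)
qed

lemma qbinom_Suc_Suc:
  assumes q: "norm q < 1"
  shows "qbinom q (Suc k) (Suc r) = q ^ Suc r * qbinom q k (Suc r) + qbinom q k r"
proof (cases "Suc r \<le> k")
  case True
  then obtain b where k: "k = Suc r + b"
    using le_Suc_ex by blast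
  note nz = qpoch_qq_nonzero[OF q]
  have nz1: "1 - q ^ Suc j \<noteq> 0" for j
    using nz[of "Suc j"] by (simp add: qpoch_qq_Suc)
  have split: "1 - q ^ Suc k = q ^ Suc r * (1 - q ^ Suc b) + (1 - q ^ Suc r)"
    using k by (simp add: algebra_simps power_add)
  have diffs: "Suc k - Suc r = Suc b" "k - Suc r = b" "k - r = Suc b" "Suc r \<le> Suc k" "r \<le> k" "Suc r \<le> k"
    using k by auto
  have frac: "P * (u * y + x) / (R * x * (B * y)) = u * (P / (R * x * B)) + P / (R * (B * y))"
    if "R \<noteq> 0" "x \<noteq> 0" "B \<noteq> 0" "y \<noteq> 0" for P R B x y u :: complex
    using that by (simp add: field_simps)
  have "qbinom q (Suc k) (Suc r) = qpoch q q k * (1 - q ^ Suc k)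
          / (qpoch q q r * (1 - q ^ Suc r) * (qpoch q q b * (1 - q ^ Suc b)))"
    by (simp only: qbinom_def diffs if_True qpoch_qq_Suc)
  also have "\<dots> = q ^ Suc r * (qpoch q q k / (qpoch q q r * (1 - q ^ Suc r) * qpoch q q b))
                   + qpoch q q k / (qpoch q q r * (qpoch q q b * (1 - q ^ Suc b)))"
    unfolding split by (rule frac[OF nz nz1 nz nz1])
  also have "\<dots> = q ^ Suc r * qbinom q k (Suc r) + qbinom q k r"
    by (simp only: qbinom_def diffs if_True qpoch_qq_Suc diff_Suc_Suc)
  finally show ?thesis .
next
  case False
  then show ?thesis
    using qbinom_diag[OF q] by (cases "r = k") (simp_all add: qbinom_def)
qed

lemma qbinom_mult_qbinom:
  assumes "norm q < 1" and "n \<le> s" and "s \<le> N"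
  shows "qbinom q N n * qbinom q (N - n) (s - n) = qbinom q N s * qbinom q s n"
proof -
  have "N - n - (s - n) = N - s"
    using assms by simp
  then show ?thesis
    unfolding qbinom_def using assms qpoch_qq_nonzero[OF assms(1)] by (simp add: field_simps)
qed

lemma qpoch_qbinomial:
  assumes q: "norm q < 1"
  shows "qpoch z q k = (\<Sum>r\<le>k. qbinom q k r * ((-1) ^ r * q ^ (r choose 2) * z ^ r))"
proof (induction k arbitrary: z)
  case 0
  then show ?case
    by (simp add: qbinom_0_right[OF q])
next
  case (Suc k)
  define A where "A r = qbinom q k r * ((-1) ^ r * q ^ (r choose 2) * (z * q) ^ r)" for r
  have IH: "qpoch (z * q) q k = (\<Sum>r\<le>k. A r)"
    unfolding A_def by (rule Suc.IH)
  have "(\<Sum>r\<le>Suc k. A r) = A 0 + (\<Sum>r\<le>k. A (Suc r))"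
    by (rule sum.atMost_Suc_shift)
  moreover have "A 0 = 1"
    by (simp add: A_def qbinom_0_right[OF q])
  moreover have "A (Suc k) = 0"
    by (simp add: A_def qbinom_def)
  ultimately have shifted: "(\<Sum>r\<le>k. A (Suc r)) = (\<Sum>r\<le>k. A r) - 1"
    by simp
  have "(\<Sum>r\<le>Suc k. qbinom q (Suc k) r * ((-1) ^ r * q ^ (r choose 2) * z ^ r))
      = 1 + (\<Sum>r\<le>k. qbinom q (Suc k) (Suc r) * ((-1) ^ Suc r * q ^ (Suc r choose 2) * z ^ Suc r))"
    by (subst sum.atMost_Suc_shift) (simp add: qbinom_0_right[OF q] qpoch_qq_nonzero[OF q])
  also have "\<dots> = 1 + (\<Sum>r\<le>k. A (Suc r)) + (\<Sum>r\<le>k. - z * A r)"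
    unfolding qbinom_Suc_Suc[OF q] sum.distrib[symmetric] add.assoc
    by (intro arg_cong2[where f="(+)"] refl sum.cong)
       (simp_all add: A_def Suc_choose_two power_add power_mult_distrib algebra_simps)
  also have "\<dots> = (1 - z) * qpoch (z * q) q k"
    unfolding shifted IH sum_distrib_left[symmetric] by (simp add: algebra_simps)
  also have "\<dots> = qpoch z q (Suc k)"
    by (simp add: qpoch_Suc_shift)
  finally show ?case ..
qed

section \<open>Euler's series\<close>

definition euler_term :: "complex \<Rightarrow> int \<Rightarrow> nat \<Rightarrow> complex" where
  "euler_term q d s = (-1) ^ s * q powi (int (s choose 2) + int s * d) / qpoch q q s"

definition euler_sum :: "complex \<Rightarrow> int \<Rightarrow> complex" where
  "euler_sum q d = suminf (euler_term q d)"

lemma euler_term_0 [simp]: "euler_term q d 0 = 1"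
  by (simp add: euler_term_def)

lemma euler_term_Suc:
  assumes "q \<noteq> 0"
  shows "euler_term q d (Suc s) = euler_term q d s * (- (q powi (int s + d)) / (1 - q ^ Suc s))"
proof -
  have "int (Suc s choose 2) + int (Suc s) * d = (int (s choose 2) + int s * d) + (int s + d)"
    by (simp add: Suc_choose_two algebra_simps)
  then have "q powi (int (Suc s choose 2) + int (Suc s) * d)
             = q powi (int (s choose 2) + int s * d) * q powi (int s + d)"
    using assms by (simp add: power_int_add)
  then show ?thesis
    unfolding euler_term_def by (simp add: qpoch_qq_Suc)
qed

lemma euler_term_plus_one:
  assumes "q \<noteq> 0"
  shows "euler_term q (d + 1) s = q ^ s * euler_term q d s"
proof -
  have "int (s choose 2) + int s * (d + 1) = (int (s choose 2) + int s * d) + int s"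
    by (simp add: algebra_simps)
  then show ?thesis
    unfolding euler_term_def using assms by (simp add: power_int_add)
qed

lemma summable_norm_euler_term:
  assumes q: "norm q < 1" and q0: "q \<noteq> 0"
  shows "summable (\<lambda>s. norm (euler_term q d s))"
proof -
  let ?r = "norm q"
  have r: "0 < ?r" "?r < 1"
    using q q0 by auto
  have "(\<lambda>s. ?r ^ s * ?r powi d / (1 - ?r)) \<longlonglongrightarrow> 0 * ?r powi d / (1 - ?r)"
    by (intro tendsto_intros LIMSEQ_power_zero) (use r in auto)
  then have "eventually (\<lambda>s. ?r ^ s * ?r powi d / (1 - ?r) < 1/2) sequentially"
    by (intro order_tendstoD(2)) auto
  then obtain N where N: "\<And>s. s \<ge> N \<Longrightarrow> ?r ^ s * ?r powi d / (1 - ?r) < 1/2"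
    unfolding eventually_sequentially by blast
  show ?thesis
  proof (rule summable_ratio_test[where c="1/2" and N=N])
    fix s
    assume s: "N \<le> s"
    have "1 - ?r \<le> 1 - ?r ^ Suc s"
      using r by (simp add: power_Suc_le_self del: power_Suc)
    also have "\<dots> \<le> norm (1 - q ^ Suc s)"
      by (metis norm_one norm_power norm_triangle_ineq2)
    finally have den: "1 - ?r \<le> norm (1 - q ^ Suc s)" .
    have "norm (norm (euler_term q d (Suc s)))
          = norm (euler_term q d s) * (?r powi (int s + d) / norm (1 - q ^ Suc s))"
      by (simp add: euler_term_Suc[OF q0] norm_mult norm_divide norm_power_int)
    also have "\<dots> \<le> norm (euler_term q d s) * (?r powi (int s + d) / (1 - ?r))"
      using r den by (intro mult_left_mono divide_left_mono) (auto intro!: mult_pos_pos)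
    also have "?r powi (int s + d) = ?r ^ s * ?r powi d"
      using r by (simp add: power_int_add)
    also have "norm (euler_term q d s) * (?r ^ s * ?r powi d / (1 - ?r)) \<le> norm (euler_term q d s) * (1/2)"
      using N[OF s] by (intro mult_left_mono) auto
    finally show "norm (norm (euler_term q d (Suc s))) \<le> 1/2 * norm (norm (euler_term q d s))"
      by simp
  qed simp
qed

lemma euler_term_sums:
  assumes "norm q < 1" and "q \<noteq> 0"
  shows "euler_term q d sums euler_sum q d"
  unfolding euler_sum_def
  by (rule summable_sums[OF summable_norm_cancel[OF summable_norm_euler_term[OF assms]]])

lemma euler_sum_recurrence:
  assumes q: "norm q < 1" and q0: "q \<noteq> 0"
  shows "euler_sum q d = (1 - q powi d) * euler_sum q (d + 1)"
proof -
  define h where "h s = euler_term q d s - euler_term q (d + 1) s" for s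
  have h_sums: "h sums (euler_sum q d - euler_sum q (d + 1))"
    unfolding h_def by (intro sums_diff euler_term_sums q q0)
  have h_eq: "h s = (1 - q ^ s) * euler_term q d s" for s
    unfolding h_def euler_term_plus_one[OF q0] by (simp add: algebra_simps)
  have "h (Suc s) = - (q powi d) * euler_term q (d + 1) s" for s
  proof -
    have "1 - q ^ Suc s \<noteq> 0"
      using qpoch_qq_nonzero[OF q, of "Suc s"] by (simp add: qpoch_qq_Suc)
    then have "h (Suc s) = - (q powi (int s + d)) * euler_term q d s"
      unfolding h_eq euler_term_Suc[OF q0] by (simp add: field_simps)
    also have "\<dots> = - (q powi d) * euler_term q (d + 1) s"
      using q0 by (simp add: euler_term_plus_one power_int_add)
    finally show ?thesis .
  qed
  then have "(\<lambda>s. h (Suc s)) sums (- (q powi d) * euler_sum q (d + 1))"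
    using sums_mult[OF euler_term_sums[OF q q0, of "d + 1"], of "- (q powi d)"] by simp
  then have "h sums (- (q powi d) * euler_sum q (d + 1))"
    by (rule sums_Suc_imp[rotated]) (simp add: h_eq)
  with h_sums show ?thesis
    using sums_unique2 by (fastforce simp: algebra_simps)
qed

lemma norm_euler_term_Suc_le:
  assumes q: "norm q < 1" and c: "0 < c" "\<And>n. c \<le> norm (qpoch q q n)" and n: "n \<ge> 1"
  shows "norm (euler_term q (int n) (Suc s)) \<le> norm q ^ n * norm q ^ s / c"
proof -
  let ?r = "norm q"
  have "int (Suc s choose 2) + int (Suc s) * int n = int ((Suc s choose 2) + Suc s * n)"
    by (simp add: algebra_simps)
  then have "norm (euler_term q (int n) (Suc s)) = ?r ^ ((Suc s choose 2) + Suc s * n) / norm (qpoch q q (Suc s))"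
    unfolding euler_term_def
    by (simp add: norm_mult norm_divide norm_power_int norm_power del: of_nat_add of_nat_mult)
  also have "\<dots> \<le> ?r ^ (n + s) / c"
  proof (rule frac_le)
    have "n + s \<le> (Suc s choose 2) + Suc s * n"
      using n by (simp add: trans_le_add2)
    then show "?r ^ ((Suc s choose 2) + Suc s * n) \<le> ?r ^ (n + s)"
      using q by (intro power_decreasing) auto
  qed (use c in auto)
  finally show ?thesis
    by (simp add: power_add)
qed

lemma euler_sum_LIMSEQ:
  assumes q: "norm q < 1" and q0: "q \<noteq> 0"
  shows "(\<lambda>n. euler_sum q (int n)) \<longlonglongrightarrow> 1"
proof -
  let ?r = "norm q"
  obtain c where c: "0 < c" "\<And>n. c \<le> norm (qpoch q q n)"
    using qpoch_qq_bounded_below[OF q] by blast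
  have r: "0 < ?r" "?r < 1"
    using q q0 by auto
  have bound: "norm (euler_sum q (int n) - 1) \<le> ?r ^ n / (c * (1 - ?r))" if n: "n \<ge> 1" for n
  proof -
    have sm: "summable (\<lambda>s. norm (euler_term q (int n) (Suc s)))"
      using summable_norm_euler_term[OF q q0] by (subst summable_Suc_iff)
    have geom: "(\<lambda>s. ?r ^ n * ?r ^ s / c) sums (?r ^ n / (c * (1 - ?r)))"
      using sums_divide[OF sums_mult[OF geometric_sums[of ?r]], of "?r ^ n" c] r
      by (simp add: field_simps)
    have "euler_sum q (int n) - 1 = (\<Sum>s. euler_term q (int n) (Suc s))"
      unfolding euler_sum_def
      using suminf_split_head[OF summable_norm_cancel[OF summable_norm_euler_term[OF q q0]]] by simp
    also have "norm \<dots> \<le> (\<Sum>s. norm (euler_term q (int n) (Suc s)))"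
      by (rule summable_norm[OF sm])
    also have "\<dots> \<le> (\<Sum>s. ?r ^ n * ?r ^ s / c)"
      using norm_euler_term_Suc_le[OF q c n] sm geom by (intro suminf_le) (auto simp: sums_iff)
    also have "\<dots> = ?r ^ n / (c * (1 - ?r))"
      using geom by (simp add: sums_iff)
    finally show ?thesis .
  qed
  have "(\<lambda>n. ?r ^ n / (c * (1 - ?r))) \<longlonglongrightarrow> 0"
    using tendsto_divide_zero[OF LIMSEQ_power_zero[of ?r], of "c * (1 - ?r)"] r by simp
  then have "(\<lambda>n. euler_sum q (int n) - 1) \<longlonglongrightarrow> 0"
    by (rule Lim_null_comparison[rotated]) (use bound in \<open>intro eventually_sequentiallyI[of 1]\<close>)
  then show ?thesis
    by (simp add: LIM_zero_iff)
qed

lemma euler_sum_eq_qpoch_inf_div: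
  assumes q: "norm q < 1" and q0: "q \<noteq> 0"
  shows "euler_sum q (int e + 1) = qpoch_inf q / qpoch q q e"
proof -
  have prod: "euler_sum q 1 = qpoch q q e * euler_sum q (int e + 1)" for e
  proof (induction e)
    case (Suc e)
    have "euler_sum q (int e + 1) = (1 - q ^ Suc e) * euler_sum q (int (Suc e) + 1)"
      using euler_sum_recurrence[OF q q0, of "int e + 1"]
      by (simp add: add.commute power_int_of_nat[symmetric] del: power_int_of_nat)
    with Suc show ?case
      by (simp add: qpoch_qq_Suc mult_ac)
  qed simp
  have "(\<lambda>e. euler_sum q (int (Suc e))) \<longlonglongrightarrow> 1"
    using euler_sum_LIMSEQ[OF q q0] by (rule LIMSEQ_Suc)
  then have "(\<lambda>e. qpoch q q e * euler_sum q (int e + 1)) \<longlonglongrightarrow> qpoch_inf q * 1"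
    by (intro tendsto_mult qpoch_qq_LIMSEQ q) (simp add: add.commute)
  then have "euler_sum q 1 = qpoch_inf q"
    unfolding prod[symmetric] by (simp add: LIMSEQ_const_iff)
  then show ?thesis
    using prod[of e] qpoch_qq_nonzero[OF q, of e] by (simp add: field_simps)
qed

lemma euler_sum_nonpos:
  assumes q: "norm q < 1" and q0: "q \<noteq> 0" and d: "d \<le> 0"
  shows "euler_sum q d = 0"
proof -
  have "euler_sum q (- int j) = 0" for j
  proof (induction j)
    case 0
    then show ?case
      using euler_sum_recurrence[OF q q0, of 0] by simp
  next
    case (Suc j)
    then show ?case
      using euler_sum_recurrence[OF q q0, of "- int (Suc j)"] by simp
  qed
  from this[of "nat (- d)"] d show ?thesis
    by simp
qed

lemma euler_term_has_sum:
  assumes q: "norm q < 1" and q0: "q \<noteq> 0"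
  shows "(euler_term q d has_sum (if d \<ge> 1 then qpoch_inf q / qpoch q q (nat (d - 1)) else 0)) UNIV"
proof -
  have "(euler_term q d has_sum euler_sum q d) UNIV"
    by (rule norm_summable_imp_has_sum[OF summable_norm_euler_term euler_term_sums]) (use q q0 in auto)
  moreover have "euler_sum q d = (if d \<ge> 1 then qpoch_inf q / qpoch q q (nat (d - 1)) else 0)"
  proof (cases "d \<ge> 1")
    case True
    then obtain e where "d = int e + 1"
      by (metis add.commute zle_iff_zadd)
    then show ?thesis
      using euler_sum_eq_qpoch_inf_div[OF q q0, of e] by simp
  qed (use euler_sum_nonpos[OF q q0] in simp)
  ultimately show ?thesis
    by simp
qed

section \<open>Double series\<close>

lemma has_sum_rows_prod_UNIV:
  fixes g :: "'b \<times> 'c \<Rightarrow> 'a :: {topological_comm_monoid_add, t3_space}"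
  assumes "(g has_sum S) UNIV" and "\<And>x. ((\<lambda>y. g (x, y)) has_sum a x) UNIV"
  shows "(a has_sum S) UNIV"
  by (rule has_sum_SigmaD[where B="\<lambda>_. UNIV"]) (use assms in auto)

lemma has_sum_columns_prod_UNIV:
  fixes g :: "'b \<times> 'c \<Rightarrow> 'a :: {topological_comm_monoid_add, t3_space}"
  assumes "(g has_sum S) UNIV" and "\<And>y. ((\<lambda>x. g (x, y)) has_sum b y) UNIV"
  shows "(b has_sum S) UNIV"
proof (rule has_sum_rows_prod_UNIV)
  show "((\<lambda>(y, x). g (x, y)) has_sum S) UNIV"
    using assms(1) has_sum_swap[where f=g and S=S and A=UNIV and B=UNIV] by simp
qed (use assms(2) in simp)

lemma summable_on_nat_pair_geometric:
  fixes g :: "nat \<times> nat \<Rightarrow> complex" and \<rho> K :: real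
  assumes "0 \<le> \<rho>" and "\<rho> < 1" and bound: "\<And>x y. norm (g (x, y)) \<le> K * \<rho> ^ x * \<rho> ^ y"
  shows "g summable_on UNIV"
proof -
  have K: "0 \<le> K"
    using order.trans[OF norm_ge_zero bound[of 0 0]] by simp
  define f where "f = (\<lambda>(x, y). K * \<rho> ^ x * \<rho> ^ y)"
  have geom: "((\<lambda>y. c * \<rho> ^ y) has_sum (c / (1 - \<rho>))) UNIV" if "0 \<le> c" for c
  proof (rule sums_nonneg_imp_has_sum_strong)
    show "(\<lambda>y. c * \<rho> ^ y) sums (c / (1 - \<rho>))"
      using assms geometric_sums[of \<rho>] sums_mult[of _ "1 / (1 - \<rho>)" c] by (simp add: field_simps)
  qed (use assms that in auto)
  have "f summable_on Sigma UNIV (\<lambda>_. UNIV)"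
  proof (rule summable_on_SigmaI)
    show "((\<lambda>y. f (x, y)) has_sum (K * \<rho> ^ x / (1 - \<rho>))) UNIV" for x
      unfolding f_def using geom[of "K * \<rho> ^ x"] K assms by simp
    show "(\<lambda>x. K * \<rho> ^ x / (1 - \<rho>)) summable_on UNIV"
      using geom[of "K / (1 - \<rho>)"] K assms unfolding summable_on_def by (auto simp: field_simps)
  qed (use K assms in \<open>auto simp: f_def\<close>)
  then have "f summable_on UNIV"
    by simp
  then have "(\<lambda>xy. norm (g xy)) summable_on UNIV"
  proof (rule summable_on_comparison_test)
    fix xy :: "nat \<times> nat"
    show "norm (g xy) \<le> f xy"
      using bound[of "fst xy" "snd xy"] by (simp add: f_def case_prod_beta)
  qed simp
  then show ?thesis
    by (simp add: summable_on_iff_abs_summable_on_complex)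
qed

lemma powi_le_sqrt_powers:
  fixes r :: real
  assumes r: "0 < r" "r < 1" and e: "int x + int y \<le> 2 * e + 2 * int C"
  shows "r powi e \<le> sqrt r ^ x * sqrt r ^ y / r ^ C"
proof -
  let ?s = "sqrt r"
  have s: "0 < ?s" "?s \<le> 1"
    using r by auto
  have "r powi e = ?s powi (2 * e)"
    using r by (metis power_int_mult real_sqrt_pow2 less_imp_le power_int_of_nat of_nat_numeral)
  also have "\<dots> \<le> ?s powi (int x + int y - 2 * int C)"
    using s e by (intro power_int_decreasing) auto
  also have "\<dots> = ?s ^ x * ?s ^ y / ?s ^ (2 * C)"
    using s by (simp add: power_int_diff power_int_add flip: power_int_of_nat)
  also have "?s ^ (2 * C) = r ^ C"
    using r by (simp add: power_mult)
  finally show ?thesis .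
qed

lemma has_sum_shift_nat_iff:
  fixes f :: "nat \<Rightarrow> 'a :: topological_comm_monoid_add"
  shows "((\<lambda>k. if r \<le> k then f (k - r) else 0) has_sum x) UNIV \<longleftrightarrow> (f has_sum x) UNIV"
proof -
  let ?g = "\<lambda>k. if r \<le> k then f (k - r) else 0"
  have "(?g has_sum x) UNIV \<longleftrightarrow> (?g has_sum x) {r..}"
    by (rule has_sum_cong_neutral) auto
  also have "\<dots> \<longleftrightarrow> ((?g \<circ> (+) r) has_sum x) UNIV"
  proof -
    have "(+) r ` UNIV = {r..}"
      by (auto simp: image_iff le_iff_add)
    then show ?thesis
      using has_sum_reindex[of "(+) r" UNIV ?g x] by simp
  qed
  also have "?g \<circ> (+) r = f"
    by (auto simp: fun_eq_iff)
  finally show ?thesis .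
qed

lemma has_sum_if_atMost:
  fixes f :: "nat \<Rightarrow> 'a :: topological_comm_monoid_add"
  shows "((\<lambda>r. if r \<le> k then f r else 0) has_sum (\<Sum>r\<le>k. f r)) UNIV"
proof -
  have "((\<lambda>r. if r \<le> k then f r else 0) has_sum (\<Sum>r\<le>k. f r)) {..k}"
    by (rule has_sum_finiteI) auto
  then show ?thesis
    by (rule has_sum_cong_neutral[THEN iffD1, rotated -1]) auto
qed

section \<open>Rearranging the double series\<close>

lemma inner_split_exponent_ge:
  fixes r s n t :: int
  assumes "2 * t = s * s - s" and "0 \<le> r" and "0 \<le> s" and "0 \<le> n"
  shows "(r + s) + r \<le> 2 * (r * r + r + t + s * (r - n + 1)) + 2 * (n * n)"
proof -
  have "2 * (r * r + r + t + s * (r - n + 1)) + 2 * (n * n) - ((r + s) + r)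
        = 2 * (r * r) + 2 * (s * r) + (s - n) * (s - n) + n * n"
    using assms(1) by algebra
  moreover have "0 \<le> 2 * (r * r) + 2 * (s * r) + (s - n) * (s - n) + n * n"
    using assms by simp
  ultimately show ?thesis
    by linarith
qed

lemma f_term_exponent_ge:
  fixes n k t m :: int
  assumes "2 * t = k * k + k" and "0 \<le> n" and "m \<ge> -3"
  shows "n + k \<le> 2 * (n * (n + 1) + t - n * k + m * n) + 8"
proof -
  have "4 * (2 * (n * (n + 1) + t - n * k + m * n) + 8 - (n + k))
        = 4 * ((n - k) * (n - k)) + ((2 * n - 5) * (2 * n - 5) + 7) + 8 * ((m + 3) * n)"
    using assms(1) by algebra
  moreover have "0 \<le> (m + 3) * n"
    using assms by simp
  ultimately show ?thesis
    by (smt (verit) zero_le_square)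
qed

lemma diagonal_exponent_ge:
  fixes n N m :: int
  assumes "0 \<le> n" and "0 \<le> N" and "m \<ge> -3"
  shows "n + N \<le> 2 * (n * (n + 1) + m * n + (N * N + N)) + 4"
proof -
  have "8 * (2 * (n * (n + 1) + m * n + (N * N + N)) + 4 - (n + N))
        = ((4 * n - 5) * (4 * n - 5) + 7) + 16 * ((m + 3) * n) + 16 * (N * N) + 8 * N"
    by algebra
  moreover have "0 \<le> (m + 3) * n"
    using assms by simp
  ultimately show ?thesis
    using assms by (smt (verit) zero_le_square)
qed

definition inner_term :: "complex \<Rightarrow> nat \<Rightarrow> nat \<Rightarrow> complex" where
  "inner_term q n k = (-1) ^ k * q powi (int (k * (k + 1) div 2) - int n * int k)
                      * qpoch q q (n + k) / qpoch q q k"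

definition inner_split_term :: "complex \<Rightarrow> nat \<Rightarrow> nat \<Rightarrow> nat \<Rightarrow> complex" where
  "inner_split_term q n r s = q ^ (r * r + r) / qpoch q q r * euler_term q (int r - int n + 1) s"

definition inner_value_term :: "complex \<Rightarrow> nat \<Rightarrow> nat \<Rightarrow> complex" where
  "inner_value_term q n i = q ^ ((n + i) * (n + i) + (n + i)) / (qpoch q q (n + i) * qpoch q q i)"

lemma inner_split_powers:
  fixes q :: "'a :: field"
  assumes q0: "q \<noteq> 0"
  shows "q powi (int ((r + s) * (r + s + 1) div 2) - int n * int (r + s)) * q ^ (r choose 2) * (q * q ^ n) ^ r
         = q ^ (r * r + r) * q powi (int (s choose 2) + int s * (int r - int n + 1))"
proof -
  define E where "E = int ((r + s) * (r + s + 1) div 2) - int n * int (r + s)"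
  define B where "B = int (s choose 2) + int s * (int r - int n + 1)"
  have identity: "t1 - n' * (r' + s') + t2 + (n' + 1) * r' = (r' * r' + r') + (t3 + s' * (r' - n' + 1))"
    if "2 * t1 = (r' + s' + 1) * (r' + s' + 1) - (r' + s' + 1)" "2 * t2 = r' * r' - r'"
       "2 * t3 = s' * s' - s'" for r' s' n' t1 t2 t3 :: int
    using that by algebra
  have exponent: "E + int (r choose 2) + int (Suc n * r) = int (r * r + r) + B"
    unfolding E_def B_def mult_Suc_div_two
    using identity[of "int (Suc (r + s) choose 2)" "int r" "int s" "int (r choose 2)" "int (s choose 2)" "int n"]
      int_choose_two[of "Suc (r + s)"] int_choose_two[of r] int_choose_two[of s]
    by (simp add: algebra_simps)
  have "q powi E * q ^ (r choose 2) * (q * q ^ n) ^ r = q powi E * q powi int (r choose 2) * q powi int (Suc n * r)"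
    by (simp only: power_int_of_nat power_mult power_Suc)
  also have "\<dots> = q powi (E + int (r choose 2) + int (Suc n * r))"
    using q0 by (simp add: power_int_add)
  also have "\<dots> = q ^ (r * r + r) * q powi B"
    unfolding exponent by (simp only: power_int_add[OF disjI1[OF q0]] power_int_of_nat)
  finally show ?thesis
    unfolding E_def B_def .
qed

lemma inner_term_eq_sum_split:
  assumes q: "norm q < 1" and q0: "q \<noteq> 0"
  shows "inner_term q n k = qpoch q q n * (\<Sum>r\<le>k. inner_split_term q n r (k - r))"
proof -
  define E where "E = int (k * (k + 1) div 2) - int n * int k"
  have "inner_term q n k = qpoch q q n * (\<Sum>r\<le>k. (-1) ^ k * q powi E
           * (qbinom q k r * ((-1) ^ r * q ^ (r choose 2) * (q * q ^ n) ^ r)) / qpoch q q k)"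
    unfolding inner_term_def E_def qpoch_add qpoch_qbinomial[OF q, of "q * q ^ n" k]
    by (simp add: sum_distrib_left sum_divide_distrib mult_ac)
  also have "(\<Sum>r\<le>k. (-1) ^ k * q powi E
           * (qbinom q k r * ((-1) ^ r * q ^ (r choose 2) * (q * q ^ n) ^ r)) / qpoch q q k)
        = (\<Sum>r\<le>k. inner_split_term q n r (k - r))"
  proof (rule sum.cong[OF refl])
    fix r
    assume "r \<in> {..k}"
    then obtain s where k: "k = r + s"
      using le_Suc_ex by auto
    have sign: "(-1::complex) ^ k * (-1) ^ r = (-1) ^ s"
      unfolding k by (simp add: power_add mult_ac flip: power2_eq_square)
    have "(-1) ^ k * q powi E * (qbinom q k r * ((-1) ^ r * q ^ (r choose 2) * (q * q ^ n) ^ r)) / qpoch q q k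
        = ((-1) ^ k * (-1) ^ r) * (q powi E * q ^ (r choose 2) * (q * q ^ n) ^ r) / (qpoch q q r * qpoch q q s)"
      unfolding qbinom_def k using qpoch_qq_nonzero[OF q] by (simp add: field_simps)
    also have "\<dots> = inner_split_term q n r (k - r)"
      unfolding sign unfolding E_def k inner_split_powers[OF q0] inner_split_term_def euler_term_def
      by (simp add: field_simps)
    finally show "(-1) ^ k * q powi E * (qbinom q k r * ((-1) ^ r * q ^ (r choose 2) * (q * q ^ n) ^ r))
        / qpoch q q k = inner_split_term q n r (k - r)" .
  qed
  finally show ?thesis .
qed

lemma norm_inner_split_term_le:
  assumes q: "norm q < 1" and q0: "q \<noteq> 0" and c: "0 < c" "\<And>n. c \<le> norm (qpoch q q n)"
  shows "norm (inner_split_term q n r s)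
         \<le> 1 / (c ^ 2 * norm q ^ (n * n)) * sqrt (norm q) ^ (r + s) * sqrt (norm q) ^ r"
proof -
  let ?r = "norm q"
  have r: "0 < ?r" "?r < 1"
    using q q0 by auto
  define E where "E = int (r * r + r) + (int (s choose 2) + int s * (int r - int n + 1))"
  have "norm (inner_split_term q n r s) = ?r powi E / (norm (qpoch q q r) * norm (qpoch q q s))"
    unfolding inner_split_term_def euler_term_def E_def using r
    by (simp add: norm_mult norm_divide norm_power norm_power_int power_int_add flip: power_int_of_nat)
  also have "\<dots> \<le> ?r powi E / (c * c)"
    using c r by (intro divide_left_mono mult_mono) (auto intro!: mult_pos_pos less_le_trans[OF c(1) c(2)])
  also have "?r powi E \<le> sqrt ?r ^ (r + s) * sqrt ?r ^ r / ?r ^ (n * n)"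
    using inner_split_exponent_ge[OF int_choose_two[of s]]
    by (intro powi_le_sqrt_powers[OF r]) (simp add: E_def)
  then have "?r powi E / (c * c) \<le> (sqrt ?r ^ (r + s) * sqrt ?r ^ r / ?r ^ (n * n)) / (c * c)"
    using c by (intro divide_right_mono) auto
  finally show ?thesis
    by (simp add: power2_eq_square field_simps)
qed

lemma inner_term_has_sum:
  assumes q: "norm q < 1" and q0: "q \<noteq> 0"
  shows "\<exists>S. (inner_term q n has_sum qpoch q q n * S) UNIV
           \<and> ((\<lambda>i. qpoch_inf q * inner_value_term q n i) has_sum S) UNIV"
proof -
  let ?r = "norm q"
  obtain c where c: "0 < c" "\<And>n. c \<le> norm (qpoch q q n)"
    using qpoch_qq_bounded_below[OF q] by blast
  define g where "g = (\<lambda>(k, r). if r \<le> k then inner_split_term q n r (k - r) else 0)"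
  have "g summable_on UNIV"
  proof (rule summable_on_nat_pair_geometric[where \<rho>="sqrt ?r" and K="1 / (c ^ 2 * ?r ^ (n * n))"])
    fix k r
    show "norm (g (k, r)) \<le> 1 / (c ^ 2 * ?r ^ (n * n)) * sqrt ?r ^ k * sqrt ?r ^ r"
    proof (cases "r \<le> k")
      case True
      then obtain s where "k = r + s"
        using le_Suc_ex by auto
      then show ?thesis
        using norm_inner_split_term_le[OF q q0 c, of n r s] True unfolding g_def by simp
    qed (use c in \<open>simp add: g_def\<close>)
  qed (use q in auto)
  then obtain S where S: "(g has_sum S) UNIV"
    using summable_on_def by blast
  have rows: "((\<lambda>k. \<Sum>r\<le>k. inner_split_term q n r (k - r)) has_sum S) UNIV"
    by (rule has_sum_rows_prod_UNIV[OF S]) (use has_sum_if_atMost in \<open>simp add: g_def\<close>)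
  let ?col = "\<lambda>r. q ^ (r * r + r) / qpoch q q r
      * (if int r - int n + 1 \<ge> 1 then qpoch_inf q / qpoch q q (nat (int r - int n + 1 - 1)) else 0)"
  have "(?col has_sum S) UNIV"
  proof (rule has_sum_columns_prod_UNIV[OF S])
    fix r
    have "((\<lambda>s. inner_split_term q n r s) has_sum ?col r) UNIV"
      unfolding inner_split_term_def by (rule has_sum_cmult_right[OF euler_term_has_sum[OF q q0]])
    then show "((\<lambda>k. g (k, r)) has_sum ?col r) UNIV"
      unfolding g_def by (simp add: has_sum_shift_nat_iff)
  qed
  also have "?col = (\<lambda>r. if n \<le> r then qpoch_inf q * inner_value_term q n (r - n) else 0)"
    by (auto simp: fun_eq_iff inner_value_term_def nat_diff_distrib mult_ac)
  finally have "((\<lambda>i. qpoch_inf q * inner_value_term q n i) has_sum S) UNIV"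
    by (rule has_sum_shift_nat_iff[THEN iffD1])
  moreover have "(inner_term q n has_sum qpoch q q n * S) UNIV"
    unfolding inner_term_eq_sum_split[OF q q0, abs_def] by (intro has_sum_cmult_right rows)
  ultimately show ?thesis
    by blast
qed

definition outer_factor :: "int \<Rightarrow> complex \<Rightarrow> nat \<Rightarrow> complex" where
  "outer_factor m q n = q powi (int (n * (n + 1)) + m * int n) / qpoch q q n ^ 3"

definition diagonal_term :: "int \<Rightarrow> complex \<Rightarrow> nat \<times> nat \<Rightarrow> complex" where
  "diagonal_term m q = (\<lambda>(n, N). if n \<le> N
     then outer_factor m q n * qpoch q q n * (qpoch_inf q * inner_value_term q n (N - n)) else 0)"

lemma f_term_eq_outer_factor_mult:
  assumes q: "norm q < 1" and q0: "q \<noteq> 0"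
  shows "f_term m q (n, k) = outer_factor m q n * inner_term q n k"
proof -
  have "q powi (int (n * (n + 1)) + int (k * (k + 1) div 2) - int n * int k + m * int n)
      = q powi (int (n * (n + 1)) + m * int n) * q powi (int (k * (k + 1) div 2) - int n * int k)"
    using q0 by (simp add: power_int_add[symmetric] algebra_simps)
  then show ?thesis
    unfolding f_term_def outer_factor_def inner_term_def using qpoch_qq_nonzero[OF q]
    by (simp add: field_simps)
qed

lemma norm_f_term_le:
  assumes q: "norm q < 1" and q0: "q \<noteq> 0" and m: "m \<ge> -3"
    and c: "0 < c" "\<And>n. c \<le> norm (qpoch q q n)" and C: "\<And>n. norm (qpoch q q n) \<le> C"
  shows "norm (f_term m q (n, k)) \<le> C / (c ^ 3 * c * norm q ^ 4) * sqrt (norm q) ^ n * sqrt (norm q) ^ k"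
proof -
  let ?r = "norm q"
  have r: "0 < ?r" "?r < 1"
    using q q0 by auto
  define E where "E = int (n * (n + 1)) + int (k * (k + 1) div 2) - int n * int k + m * int n"
  have "norm (f_term m q (n, k))
        = ?r powi E * norm (qpoch q q (n + k)) / (norm (qpoch q q n) ^ 3 * norm (qpoch q q k))"
    unfolding f_term_def E_def by (simp add: norm_mult norm_divide norm_power norm_power_int)
  also have "\<dots> \<le> ?r powi E * C / (c ^ 3 * c)"
    using c C r order.trans[OF norm_ge_zero C]
    by (intro frac_le mult_left_mono mult_mono power_mono) auto
  also have "?r powi E \<le> sqrt ?r ^ n * sqrt ?r ^ k / ?r ^ 4"
  proof (rule powi_le_sqrt_powers[OF r])
    have "2 * int (k * (k + 1) div 2) = int k * int k + int k"
      unfolding mult_Suc_div_two using int_choose_two[of "Suc k"] by (simp add: algebra_simps)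
    from f_term_exponent_ge[OF this of_nat_0_le_iff[of n] m]
    show "int n + int k \<le> 2 * E + 2 * int 4"
      unfolding E_def by (simp add: algebra_simps)
  qed
  then have "?r powi E * C / (c ^ 3 * c) \<le> (sqrt ?r ^ n * sqrt ?r ^ k / ?r ^ 4) * C / (c ^ 3 * c)"
    using c order.trans[OF norm_ge_zero C] by (intro divide_right_mono mult_right_mono) auto
  finally show ?thesis
    by (simp add: field_simps)
qed

lemma f_term_summable:
  assumes q: "norm q < 1" and q0: "q \<noteq> 0" and m: "m \<ge> -3"
  shows "f_term m q summable_on UNIV"
proof -
  obtain c where c: "0 < c" "\<And>n. c \<le> norm (qpoch q q n)"
    using qpoch_qq_bounded_below[OF q] by blast
  show ?thesis
    by (rule summable_on_nat_pair_geometric[OF _ _ norm_f_term_le[OF q q0 m c norm_qpoch_qq_le[OF q]]])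
       (use q in auto)
qed

lemma norm_diagonal_term_le:
  assumes q: "norm q < 1" and q0: "q \<noteq> 0" and m: "m \<ge> -3"
    and c: "0 < c" "\<And>n. c \<le> norm (qpoch q q n)"
  shows "norm (diagonal_term m q (n, N))
         \<le> norm (qpoch_inf q) / (c ^ 2 * c * c * norm q ^ 2) * sqrt (norm q) ^ n * sqrt (norm q) ^ N"
proof (cases "n \<le> N")
  case True
  let ?r = "norm q"
  have r: "0 < ?r" "?r < 1"
    using q q0 by auto
  obtain i where N: "N = n + i"
    using True le_Suc_ex by auto
  define E where "E = int (n * (n + 1)) + m * int n + int (N * N + N)"
  have "diagonal_term m q (n, N) = qpoch_inf q * (q powi (int (n * (n + 1)) + m * int n) * q ^ (N * N + N)
                 / (qpoch q q n ^ 2 * qpoch q q N * qpoch q q i))"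
    unfolding diagonal_term_def outer_factor_def inner_value_term_def using True N qpoch_qq_nonzero[OF q, of n]
    by (simp add: power2_eq_square power3_eq_cube mult_ac)
  moreover have "?r powi (int (n * (n + 1)) + m * int n) * ?r ^ (N * N + N) = ?r powi E"
    unfolding E_def using r by (simp add: power_int_add flip: power_int_of_nat)
  ultimately have "norm (diagonal_term m q (n, N))
      = norm (qpoch_inf q) * (?r powi E / (norm (qpoch q q n) ^ 2 * norm (qpoch q q N) * norm (qpoch q q i)))"
    by (simp add: norm_mult norm_divide norm_power norm_power_int)
  also have "\<dots> \<le> norm (qpoch_inf q) * (?r powi E / (c ^ 2 * c * c))"
    using c r by (intro mult_left_mono divide_left_mono mult_mono power_mono)
                 (auto intro!: mult_pos_pos less_le_trans[OF c(1) c(2)] zero_less_power)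
  also have "?r powi E \<le> sqrt ?r ^ n * sqrt ?r ^ N / ?r ^ 2"
    using diagonal_exponent_ge[OF of_nat_0_le_iff[of n] of_nat_0_le_iff[of N] m]
    by (intro powi_le_sqrt_powers[OF r]) (simp add: E_def algebra_simps)
  then have "norm (qpoch_inf q) * (?r powi E / (c ^ 2 * c * c))
             \<le> norm (qpoch_inf q) * ((sqrt ?r ^ n * sqrt ?r ^ N / ?r ^ 2) / (c ^ 2 * c * c))"
    using c by (intro divide_right_mono mult_left_mono) auto
  finally show ?thesis
    by (simp add: field_simps)
qed (use c in \<open>simp add: diagonal_term_def\<close>)

lemma diagonal_term_summable:
  assumes q: "norm q < 1" and q0: "q \<noteq> 0" and m: "m \<ge> -3"
  shows "diagonal_term m q summable_on UNIV"
proof -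
  obtain c where c: "0 < c" "\<And>n. c \<le> norm (qpoch q q n)"
    using qpoch_qq_bounded_below[OF q] by blast
  show ?thesis
    by (rule summable_on_nat_pair_geometric[OF _ _ norm_diagonal_term_le[OF q q0 m c]]) (use q in auto)
qed

lemma f_series_has_sum_diagonal:
  assumes q: "norm q < 1" and q0: "q \<noteq> 0" and m: "m \<ge> -3"
  shows "((\<lambda>N. qpoch_inf q * (q ^ (N * N + N) / qpoch q q N *
            (\<Sum>n\<le>N. q powi (int (n * (n + 1)) + m * int n) / (qpoch q q n ^ 2 * qpoch q q (N - n)))))
          has_sum f_series m q) UNIV"
proof -
  obtain T where T: "\<And>n. (inner_term q n has_sum qpoch q q n * T n) UNIV"
      "\<And>n. ((\<lambda>i. qpoch_inf q * inner_value_term q n i) has_sum T n) UNIV"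
    using inner_term_has_sum[OF q q0] by metis
  have "(f_term m q has_sum f_series m q) UNIV"
    unfolding f_series_def by (rule has_sum_infsum[OF f_term_summable[OF q q0 m]])
  then have f_rows: "((\<lambda>n. outer_factor m q n * (qpoch q q n * T n)) has_sum f_series m q) UNIV"
    by (rule has_sum_rows_prod_UNIV)
       (unfold f_term_eq_outer_factor_mult[OF q q0], intro has_sum_cmult_right T)
  obtain S where S: "(diagonal_term m q has_sum S) UNIV"
    using diagonal_term_summable[OF q q0 m] summable_on_def by blast
  have "((\<lambda>n. outer_factor m q n * (qpoch q q n * T n)) has_sum S) UNIV"
  proof (rule has_sum_rows_prod_UNIV[OF S])
    fix n
    have "((\<lambda>i. outer_factor m q n * qpoch q q n * (qpoch_inf q * inner_value_term q n i))
           has_sum outer_factor m q n * qpoch q q n * T n) UNIV"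
      by (intro has_sum_cmult_right T)
    then have "((\<lambda>N. if n \<le> N then outer_factor m q n * qpoch q q n * (qpoch_inf q * inner_value_term q n (N - n))
               else 0) has_sum outer_factor m q n * qpoch q q n * T n) UNIV"
      by (rule has_sum_shift_nat_iff[THEN iffD2])
    then show "((\<lambda>N. diagonal_term m q (n, N)) has_sum outer_factor m q n * (qpoch q q n * T n)) UNIV"
      unfolding diagonal_term_def by (simp add: mult_ac)
  qed
  then have "S = f_series m q"
    using f_rows by (rule has_sum_unique)
  moreover have "((\<lambda>N. \<Sum>n\<le>N. diagonal_term m q (n, N)) has_sum S) UNIV"
    by (rule has_sum_columns_prod_UNIV[OF S])
       (use has_sum_if_atMost in \<open>simp add: diagonal_term_def cong: if_cong\<close>)
  moreover have "(\<Sum>n\<le>N. diagonal_term m q (n, N)) = qpoch_inf q * (q ^ (N * N + N) / qpoch q q N *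
            (\<Sum>n\<le>N. q powi (int (n * (n + 1)) + m * int n) / (qpoch q q n ^ 2 * qpoch q q (N - n))))" for N
    unfolding sum_distrib_left
  proof (rule sum.cong[OF refl])
    fix n
    assume "n \<in> {..N}"
    then show "diagonal_term m q (n, N) = qpoch_inf q * (q ^ (N * N + N) / qpoch q q N *
            (q powi (int (n * (n + 1)) + m * int n) / (qpoch q q n ^ 2 * qpoch q q (N - n))))"
      unfolding diagonal_term_def outer_factor_def inner_value_term_def using qpoch_qq_nonzero[OF q]
      by (simp add: field_simps power2_eq_square power3_eq_cube)
  qed
  ultimately show ?thesis
    by simp
qed

section \<open>The finite sums P_N\<close>

definition diagonal_weight :: "int \<Rightarrow> complex \<Rightarrow> nat \<Rightarrow> complex" where
  "diagonal_weight m q s = (-1) ^ s * q ^ (Suc s choose 2) * qpoch (q powi (m + 1)) q s"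

lemma qbinom_double_sum_regroup:
  assumes q: "norm q < 1" and q0: "q \<noteq> 0" and s: "s = n + d" and sN: "s \<le> N"
  shows "qbinom q N n * q powi (int (n * (n + 1)) + m * int n)
           * (qbinom q (N - n) d * ((-1) ^ d * q ^ (d choose 2) * (q * q ^ n) ^ d))
         = qbinom q N s * ((-1) ^ s * q ^ (Suc s choose 2))
           * (qbinom q s n * ((-1) ^ n * q ^ (n choose 2) * (q powi (m + 1)) ^ n))"
proof -
  have qbinoms: "qbinom q N n * qbinom q (N - n) d = qbinom q N s * qbinom q s n"
    using qbinom_mult_qbinom[OF q, of n s N] sN s by simp
  have "(-1::complex) ^ n * (-1) ^ n = 1"
    by (simp flip: power_mult_distrib)
  then have sign: "(-1::complex) ^ d = (-1) ^ s * (-1) ^ n"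
    unfolding s power_add by (simp add: mult_ac)
  have identity: "(n' * (n' + 1) + m * n') + (t3 + (n' + 1) * d') = t1 + (t2 + (m + 1) * n')"
    if "2 * t1 = (n' + d' + 1) * (n' + d' + 1) - (n' + d' + 1)" "2 * t2 = n' * n' - n'"
       "2 * t3 = d' * d' - d'" for n' d' t1 t2 t3 :: int
    using that by algebra
  have exponent: "(int (n * (n + 1)) + m * int n) + (int (d choose 2) + int (Suc n * d))
          = int (Suc s choose 2) + (int (n choose 2) + (m + 1) * int n)"
    using identity[of "int (Suc s choose 2)" "int n" "int d" "int (n choose 2)" "int (d choose 2)"]
      int_choose_two[of "Suc s"] int_choose_two[of n] int_choose_two[of d]
    unfolding s by (simp add: algebra_simps)
  have "q powi (int (n * (n + 1)) + m * int n) * (q ^ (d choose 2) * (q * q ^ n) ^ d)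
      = q powi (int (n * (n + 1)) + m * int n) * (q powi int (d choose 2) * q powi int (Suc n * d))"
    by (simp only: power_int_of_nat power_mult power_Suc)
  also have "\<dots> = q powi (int (Suc s choose 2) + (int (n choose 2) + (m + 1) * int n))"
    unfolding exponent[symmetric] by (simp only: power_int_add[OF disjI1[OF q0]])
  also have "\<dots> = q ^ (Suc s choose 2) * (q ^ (n choose 2) * (q powi (m + 1)) ^ n)"
    unfolding power_int_power' by (simp only: power_int_add[OF disjI1[OF q0]] power_int_of_nat)
  finally have powers: "q powi (int (n * (n + 1)) + m * int n) * (q ^ (d choose 2) * (q * q ^ n) ^ d)
      = q ^ (Suc s choose 2) * (q ^ (n choose 2) * (q powi (m + 1)) ^ n)" .
  have "qbinom q N n * q powi (int (n * (n + 1)) + m * int n)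
          * (qbinom q (N - n) d * ((-1) ^ d * q ^ (d choose 2) * (q * q ^ n) ^ d))
        = (qbinom q N n * qbinom q (N - n) d) * (-1) ^ d
          * (q powi (int (n * (n + 1)) + m * int n) * (q ^ (d choose 2) * (q * q ^ n) ^ d))"
    by (simp add: mult_ac)
  also have "\<dots> = qbinom q N s * ((-1) ^ s * q ^ (Suc s choose 2))
                    * (qbinom q s n * ((-1) ^ n * q ^ (n choose 2) * (q powi (m + 1)) ^ n))"
    unfolding qbinoms sign powers by (simp add: mult_ac)
  finally show ?thesis .
qed

lemma diagonal_sum_eq_qbinom_sum:
  assumes q: "norm q < 1" and q0: "q \<noteq> 0"
  shows "qpoch q q N ^ 2 * (\<Sum>n\<le>N. q powi (int (n * (n + 1)) + m * int n) / (qpoch q q n ^ 2 * qpoch q q (N - n)))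
       = (\<Sum>s\<le>N. qbinom q N s * diagonal_weight m q s)"
proof -
  define F where "F n j = qbinom q N n * q powi (int (n * (n + 1)) + m * int n)
                          * (qbinom q (N - n) j * ((-1) ^ j * q ^ (j choose 2) * (q * q ^ n) ^ j))" for n j
  have expand: "qpoch q q N ^ 2 * (q powi (int (n * (n + 1)) + m * int n) / (qpoch q q n ^ 2 * qpoch q q (N - n)))
        = (\<Sum>j\<le>N - n. F n j)" if "n \<le> N" for n
  proof -
    have "qpoch q q N = qpoch q q n * qpoch (q * q ^ n) q (N - n)"
      using qpoch_add[of q q n "N - n"] that by simp
    then have "qpoch q q N ^ 2 * (q powi (int (n * (n + 1)) + m * int n) / (qpoch q q n ^ 2 * qpoch q q (N - n)))
        = qbinom q N n * q powi (int (n * (n + 1)) + m * int n) * qpoch (q * q ^ n) q (N - n)"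
      unfolding qbinom_def using that qpoch_qq_nonzero[OF q] by (simp add: power2_eq_square field_simps)
    then show ?thesis
      unfolding qpoch_qbinomial[OF q, of "q * q ^ n" "N - n"] F_def by (simp add: sum_distrib_left)
  qed
  have "qpoch q q N ^ 2 * (\<Sum>n\<le>N. q powi (int (n * (n + 1)) + m * int n) / (qpoch q q n ^ 2 * qpoch q q (N - n)))
      = (\<Sum>n\<le>N. \<Sum>j\<le>N - n. F n j)"
    unfolding sum_distrib_left by (intro sum.cong refl expand) simp
  also have "\<dots> = (\<Sum>(n, j)\<in>Sigma {..N} (\<lambda>n. {..N - n}). F n j)"
    by (simp add: sum.Sigma)
  also have "Sigma {..N} (\<lambda>n. {..N - n}) = {(i, j). i + j \<le> N}"
    by auto
  also have "(\<Sum>(n, j)\<in>{(i, j). i + j \<le> N}. F n j) = (\<Sum>s\<le>N. \<Sum>n\<le>s. F n (s - n))"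
    by (rule sum.triangle_reindex_eq)
  also have "\<dots> = (\<Sum>s\<le>N. qbinom q N s * diagonal_weight m q s)"
  proof (rule sum.cong[OF refl])
    fix s
    assume "s \<in> {..N}"
    then have "(\<Sum>n\<le>s. F n (s - n)) = (\<Sum>n\<le>s. qbinom q N s * ((-1) ^ s * q ^ (Suc s choose 2))
                        * (qbinom q s n * ((-1) ^ n * q ^ (n choose 2) * (q powi (m + 1)) ^ n)))"
      unfolding F_def by (intro sum.cong refl qbinom_double_sum_regroup[OF q q0]) auto
    then show "(\<Sum>n\<le>s. F n (s - n)) = qbinom q N s * diagonal_weight m q s"
      unfolding diagonal_weight_def qpoch_qbinomial[OF q] by (simp add: sum_distrib_left mult_ac)
  qed
  finally show ?thesis .
qed

lemma f_series_eq_if_diagonal_values: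
  assumes q: "norm q < 1" and q0: "q \<noteq> 0" and m: "m \<ge> -3"
    and P: "\<And>N. (\<Sum>s\<le>N. qbinom q N s * diagonal_weight m q s) = P N"
  shows "f_series m q = qpoch_inf q * (\<Sum>n. P n * q ^ (n * (n + 1)) / qpoch q q n ^ 3)"
proof -
  have "qpoch_inf q * (q ^ (N * N + N) / qpoch q q N *
            (\<Sum>n\<le>N. q powi (int (n * (n + 1)) + m * int n) / (qpoch q q n ^ 2 * qpoch q q (N - n))))
          = qpoch_inf q * (P N * q ^ (N * (N + 1)) / qpoch q q N ^ 3)" for N
  proof -
    have "(\<Sum>n\<le>N. q powi (int (n * (n + 1)) + m * int n) / (qpoch q q n ^ 2 * qpoch q q (N - n)))
          = P N / qpoch q q N ^ 2"
      using diagonal_sum_eq_qbinom_sum[OF q q0, of N m] P[of N] qpoch_qq_nonzero[OF q, of N]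
      by (simp add: field_simps)
    moreover have "N * N + N = N * (N + 1)"
      by (simp add: algebra_simps)
    ultimately show ?thesis
      using qpoch_qq_nonzero[OF q, of N] by (simp add: power2_eq_square power3_eq_cube field_simps)
  qed
  then have "(\<lambda>N. qpoch_inf q * (P N * q ^ (N * (N + 1)) / qpoch q q N ^ 3)) sums f_series m q"
    using has_sum_imp_sums[OF f_series_has_sum_diagonal[OF q q0 m]] by simp
  moreover from this have "summable (\<lambda>N. P N * q ^ (N * (N + 1)) / qpoch q q N ^ 3)"
    using qpoch_inf_nonzero[OF q] summable_cmult_iff sums_summable by blast
  ultimately show ?thesis
    using sums_unique suminf_mult by metis
qed

lemma diagonal_weight_eq_0:
  assumes "q \<noteq> 0" and "m + 1 = - int j" and "j < s"
  shows "diagonal_weight m q s = 0"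
  unfolding diagonal_weight_def assms(2) by (simp add: qpoch_powi_neg_eq_0 assms)

lemma diagonal_weight_0_1_2:
  "diagonal_weight m q 0 = 1"
  "diagonal_weight m q (Suc 0) = - q * (1 - q powi (m + 1))"
  "diagonal_weight m q 2 = q ^ 3 * ((1 - q powi (m + 1)) * (1 - q powi (m + 1) * q))"
  by (simp_all add: diagonal_weight_def qpoch_def numeral_2_eq_2 numeral_3_eq_3)

lemma sum_qbinom_truncate:
  assumes "\<And>s. s \<ge> 3 \<Longrightarrow> w s = 0"
  shows "(\<Sum>s\<le>N. qbinom q N s * w s) = qbinom q N 0 * w 0 + qbinom q N 1 * w 1 + qbinom q N 2 * w 2"
proof -
  have "(\<Sum>s\<le>N. qbinom q N s * w s) = (\<Sum>s\<le>N + 3. qbinom q N s * w s)"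
    by (rule sum.mono_neutral_left) (auto simp: qbinom_def)
  also have "\<dots> = (\<Sum>s<3. qbinom q N s * w s)"
    by (rule sum.mono_neutral_right) (use assms in auto)
  also have "\<dots> = qbinom q N 0 * w 0 + qbinom q N 1 * w 1 + qbinom q N 2 * w 2"
    by (simp add: numeral_3_eq_3 numeral_2_eq_2)
  finally show ?thesis .
qed

lemma sum_qbinom_diagonal_weight_minus_one:
  assumes "norm q < 1" and "q \<noteq> 0"
  shows "(\<Sum>s\<le>N. qbinom q N s * diagonal_weight (-1) q s) = 1"
proof -
  have "diagonal_weight (-1) q s = 0" if "s \<ge> 1" for s
    using diagonal_weight_eq_0[OF assms(2), of "-1" 0] that by simp
  then show ?thesis
    using sum_qbinom_truncate[of "diagonal_weight (-1) q" q N]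
    by (simp add: diagonal_weight_0_1_2 qbinom_0_right[OF assms(1)])
qed

lemma sum_qbinom_diagonal_weight_minus_two:
  assumes "norm q < 1" and "q \<noteq> 0"
  shows "(\<Sum>s\<le>N. qbinom q N s * diagonal_weight (-2) q s) = 2 - q ^ N"
proof -
  have "diagonal_weight (-2) q s = 0" if "s \<ge> 2" for s
    using diagonal_weight_eq_0[OF assms(2), of "-2" 1] that by simp
  moreover have "diagonal_weight (-2) q (Suc 0) = 1 - q"
    using assms(2) by (simp add: diagonal_weight_0_1_2 power_int_minus field_simps)
  ultimately have "(\<Sum>s\<le>N. qbinom q N s * diagonal_weight (-2) q s) = 1 + qbinom q N 1 * (1 - q)"
    using sum_qbinom_truncate[of "diagonal_weight (-2) q" q N] assms(2)
    by (simp add: diagonal_weight_0_1_2 qbinom_0_right[OF assms(1)])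
  then show ?thesis
    using qbinom_1_right[OF assms(1), of N] by simp
qed

lemma sum_qbinom_diagonal_weight_minus_three:
  assumes "norm q < 1" and "q \<noteq> 0"
  shows "(\<Sum>s\<le>N. qbinom q N s * diagonal_weight (-3) q s)
         = (3 + inverse q) - (2 + 2 * inverse q) * q ^ N + q powi (2 * int N - 1)"
proof -
  have "diagonal_weight (-3) q s = 0" if "s \<ge> 3" for s
    using diagonal_weight_eq_0[OF assms(2), of "-3" 2] that by simp
  moreover have "diagonal_weight (-3) q (Suc 0) = (1 - q) * ((1 + q) / q)"
    using assms(2) by (simp add: diagonal_weight_0_1_2 power_int_minus field_simps power2_eq_square)
  moreover have "diagonal_weight (-3) q 2 = (1 - q) * (1 - q ^ 2)"
    using assms(2) by (simp add: diagonal_weight_0_1_2 power_int_minus field_simps power2_eq_square power3_eq_cube)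
  ultimately have "(\<Sum>s\<le>N. qbinom q N s * diagonal_weight (-3) q s)
      = 1 + (qbinom q N 1 * (1 - q)) * ((1 + q) / q) + qbinom q N 2 * ((1 - q) * (1 - q ^ 2))"
    using sum_qbinom_truncate[of "diagonal_weight (-3) q" q N]
    by (simp add: diagonal_weight_0_1_2 qbinom_0_right[OF assms(1)] mult.assoc)
  also have "\<dots> = 1 + (1 - q ^ N) * ((1 + q) / q) + (1 - q ^ N) * (1 - q ^ N / q)"
    unfolding qbinom_1_right[OF assms(1)] qbinom_2_right[OF assms] ..
  also have "\<dots> = (3 + inverse q) - (2 + 2 * inverse q) * q ^ N + q ^ N * q ^ N / q"
    using assms(2) by (simp add: field_simps)
  also have "q ^ N * q ^ N / q = q powi (int (N + N) - 1)"
    unfolding power_int_diff[OF disjI1[OF assms(2)]] by (simp only: power_add power_int_of_nat power_int_1_right)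
  finally show ?thesis
    by simp
qed

theorem mainTheorem8:
  fixes q :: complex
  assumes "norm q < 1" and "q \<noteq> 0"
  shows "f_series (-1) q = qpoch_inf q * (\<Sum>n. q ^ (n * (n + 1)) / (qpoch q q n) ^ 3)
       \<and> f_series (-2) q = qpoch_inf q * (\<Sum>n. (2 - q ^ n) * q ^ (n * (n + 1)) / (qpoch q q n) ^ 3)
       \<and> f_series (-3) q = qpoch_inf q *
           (\<Sum>n. ((3 + inverse q) - (2 + 2 * inverse q) * q ^ n + q powi (2 * int n - 1))
                 * q ^ (n * (n + 1)) / (qpoch q q n) ^ 3)"
  using f_series_eq_if_diagonal_values[OF assms, of "-1", OF _ sum_qbinom_diagonal_weight_minus_one[OF assms]]
    f_series_eq_if_diagonal_values[OF assms, of "-2", OF _ sum_qbinom_diagonal_weight_minus_two[OF assms]]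
    f_series_eq_if_diagonal_values[OF assms, of "-3", OF _ sum_qbinom_diagonal_weight_minus_three[OF assms]]
  by simp

end
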